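(* Let $\beta\in\mathbb{F}_{p^m}\setminus\{0\}$ and $\mathcal{R}_{\alpha,\beta}=R[x]/\langle x^{4p^s}-(\alpha+\beta u)\rangle$. Then: (a) $\mathcal{R}_{\alpha,\beta}$ has exactly two maximal ideals, namely $\langle x^2+\gamma x+\frac{\gamma^2}{2}\rangle$ and $\langle x^2-\gamma x+\frac{\gamma^2}{2}\rangle$; (b) the set of nilpotent elements of $\mathcal{R}_{\alpha,\beta}$ is the ideal $\langle x^4-\alpha_0\rangle$; (c) the set of non-units of $\mathcal{R}_{\alpha,\beta}$ is $\langle x^2+\gamma x+\frac{\gamma^2}{2}\rangle\cup\langle x^2-\gamma x+\frac{\gamma^2}{2}\rangle$.
   Context: Let $p$ be an odd prime and $m,s$ positive integers with $p^m\equiv 3\pmod 4$; $\mathbb{F}_{p^m}$ is the field with $p^m$ elements and $R=\mathbb{F}_{p^m}[u]/\langle u^2\rangle$. Fix $\alpha\in\mathbb{F}_{p^m}\setminus\{0\}$ that is not a square in $\mathbb{F}_{p^m}$, let $\alpha_0\in\mathbb{F}_{p^m}$ satisfy $\alpha_0^{p^s}=\alpha$, and let $\gamma\in\mathbb{F}_{p^m}$ satisfy $\gamma^4+4\alpha_0=0$. *)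

theory Defs
  imports "HOL-Algebra.Algebra" "HOL-Computational_Algebra.Primes"
begin

text \<open>R = F[u]/(u^2), modelled as pairs (a,b) standing for a + b u, over a field type 'a.\<close>
definition dual_ring :: "('a::field \<times> 'a) ring" where
  "dual_ring = \<lparr>carrier = UNIV,
     monoid.mult = (\<lambda>x y. (fst x * fst y, fst x * snd y + snd x * fst y)),
     one = (1, 0),
     ring.zero = (0, 0),
     add = (\<lambda>x y. (fst x + fst y, snd x + snd y))\<rparr>"

abbreviation Rx :: "('a::field \<times> 'a, nat \<Rightarrow> 'a \<times> 'a) up_ring" where
  "Rx \<equiv> UP dual_ring"

definition gen_poly :: "nat \<Rightarrow> 'a::field \<Rightarrow> 'a \<Rightarrow> nat \<Rightarrow> 'a \<times> 'a" where
  "gen_poly n \<alpha> \<beta> = monom Rx (1, 0) n \<ominus>\<^bsub>Rx\<^esub> monom Rx (\<alpha>, \<beta>) 0"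

definition Rab :: "nat \<Rightarrow> 'a::field \<Rightarrow> 'a \<Rightarrow> (nat \<Rightarrow> 'a \<times> 'a) set ring" where
  "Rab n \<alpha> \<beta> = Rx Quot (Idl\<^bsub>Rx\<^esub> {gen_poly n \<alpha> \<beta>})"

definition cls :: "nat \<Rightarrow> 'a::field \<Rightarrow> 'a \<Rightarrow> (nat \<Rightarrow> 'a \<times> 'a) \<Rightarrow> (nat \<Rightarrow> 'a \<times> 'a) set" where
  "cls n \<alpha> \<beta> f = (Idl\<^bsub>Rx\<^esub> {gen_poly n \<alpha> \<beta>}) +>\<^bsub>Rx\<^esub> f"

definition quad_poly :: "'a::field \<Rightarrow> 'a \<Rightarrow> nat \<Rightarrow> 'a \<times> 'a" where
  "quad_poly c d = monom Rx (1,0) 2 \<oplus>\<^bsub>Rx\<^esub> monom Rx (c,0) 1 \<oplus>\<^bsub>Rx\<^esub> monom Rx (d,0) 0"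

definition quart_poly :: "'a::field \<Rightarrow> nat \<Rightarrow> 'a \<times> 'a" where
  "quart_poly a = monom Rx (1,0) 4 \<ominus>\<^bsub>Rx\<^esub> monom Rx (a,0) 0"

definition nilpotent_elem :: "('b, 'c) ring_scheme \<Rightarrow> 'b \<Rightarrow> bool" where
  "nilpotent_elem S a \<longleftrightarrow> a \<in> carrier S \<and> (\<exists>k::nat. a [^]\<^bsub>S\<^esub> k = \<zero>\<^bsub>S\<^esub>)"

end

theory Submission
  imports Defs "HOL-Computational_Algebra.Polynomial" "HOL-Number_Theory.Residues"
begin

text \<open>
  Write \<open>x\<close> for the class of \<open>x\<close> and \<open>q\<^sub>\<plusminus> = x\<^sup>2 \<plusminus> \<gamma> x + \<gamma>\<^sup>2/2\<close>. Since \<open>\<gamma>\<^sup>4 = -4\<alpha>\<^sub>0\<close> we have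
  \<open>x\<^sup>4 - \<alpha>\<^sub>0 = q\<^sub>+ q\<^sub>-\<close>, and by the Frobenius \<open>(x\<^sup>4 - \<alpha>\<^sub>0)\<^bsup>p^s\<^esup> = x\<^sup>n - \<alpha> = \<beta> u\<close>; so \<open>x\<^sup>4 - \<alpha>\<^sub>0\<close> is
  nilpotent and \<open>u\<close> lies in both ideals \<open>\<langle>q\<^sub>\<plusminus>\<rangle>\<close>. Hence modulo \<open>q\<^sub>\<plusminus>\<close> every element reduces to
  \<open>r + s x\<close>, which is invertible modulo \<open>q\<^sub>\<plusminus>\<close> unless \<open>r = s = 0\<close>: its norm
  \<open>r\<^sup>2 \<minusplus> \<gamma> r s + (\<gamma>\<^sup>2/2) s\<^sup>2\<close> is a quarter of a sum of two squares, and \<open>-1\<close> is not a square in \<open>F\<close>.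

  Evaluation at a root of \<open>q\<^sub>\<plusminus>\<close> in \<open>F[i]\<close> shows that \<open>\<langle>q\<^sub>\<plusminus>\<rangle>\<close> is exactly the kernel of that
  evaluation, so it consists of non-units and \<open>q\<^sub>+ \<notin> \<langle>q\<^sub>-\<rangle>\<close>, \<open>q\<^sub>- \<notin> \<langle>q\<^sub>+\<rangle>\<close>. An element outside
  both ideals is invertible modulo \<open>q\<^sub>+\<close> and modulo \<open>q\<^sub>-\<close>, hence modulo the nilpotent \<open>q\<^sub>+ q\<^sub>-\<close>,
  hence a unit. So the non-units are \<open>\<langle>q\<^sub>+\<rangle> \<union> \<langle>q\<^sub>-\<rangle>\<close>, which forces these two incomparable
  ideals to be the only maximal ones, and since \<open>F[i]\<close> is a domain the nilpotents are
  \<open>\<langle>q\<^sub>+\<rangle> \<inter> \<langle>q\<^sub>-\<rangle> = \<langle>x\<^sup>4 - \<alpha>\<^sub>0\<rangle>\<close>.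
\<close>

section \<open>Fields in which \<open>-1\<close> is not a square\<close>

lemma sum_squares_eq_zero_iff:
  fixes a b :: "'a::field"
  assumes "\<not> (\<exists>y. y ^ 2 = (-1 :: 'a))"
  shows "a * a + b * b = 0 \<longleftrightarrow> a = 0 \<and> b = 0"
proof
  assume sum0: "a * a + b * b = 0"
  have "b = 0"
  proof (rule ccontr)
    assume "b \<noteq> 0"
    then have "(a / b) ^ 2 = -1"
      using sum0 by (simp add: power_divide power2_eq_square field_simps eq_neg_iff_add_eq_0)
    then show False using assms by blast
  qed
  then show "a = 0 \<and> b = 0" using sum0 by simp
qed simp

lemma two_neq_zero_if_minus_one_nonsquare:
  assumes "\<not> (\<exists>y. y ^ 2 = (-1 :: 'a::field))"
  shows "(2::'a) \<noteq> 0"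
proof
  assume "(2::'a) = 0"
  then have "(1::'a) ^ 2 = -1" by (simp add: eq_neg_iff_add_eq_0)
  then show False using assms by blast
qed

lemma quadratic_norm_eq_zero_imp:
  fixes r s c :: "'a::field"
  assumes minus_one: "\<not> (\<exists>y. y ^ 2 = (-1 :: 'a))" and "c \<noteq> 0"
    and norm0: "r * r - c * r * s + s * s * (c ^ 2 / 2) = 0"
  shows "r = 0 \<and> s = 0"
proof -
  have "(2::'a) \<noteq> 0" by (rule two_neq_zero_if_minus_one_nonsquare[OF minus_one])
  then have "(2 * r - c * s) * (2 * r - c * s) + (c * s) * (c * s)
      = 4 * (r * r - c * r * s + s * s * (c ^ 2 / 2))"
    by (simp add: field_simps power2_eq_square)
  also have "\<dots> = 0" unfolding norm0 by simp
  finally have "2 * r - c * s = 0 \<and> c * s = 0"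
    by (rule sum_squares_eq_zero_iff[OF minus_one, THEN iffD1])
  then show ?thesis using \<open>c \<noteq> 0\<close> \<open>(2::'a) \<noteq> 0\<close> by auto
qed

lemma minus_one_nonsquare_if_nonsquare_power:
  fixes \<alpha>0 \<gamma> :: "'a::field"
  assumes "(2::'a) \<noteq> 0" and "\<gamma> ^ 4 + 4 * \<alpha>0 = 0" and "\<not> (\<exists>y. y ^ 2 = \<alpha>0 ^ N)"
  shows "\<not> (\<exists>y. y ^ 2 = (-1 :: 'a))"
proof
  assume "\<exists>y. y ^ 2 = (-1 :: 'a)"
  then obtain i :: 'a where i: "i ^ 2 = -1" by blast
  have "(i * \<gamma> ^ 2 / 2) ^ 2 = - (\<gamma> ^ 4) / 4"
    using i by (simp add: power_mult_distrib power_divide flip: power_mult)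
  also have "\<dots> = \<alpha>0"
  proof -
    have "(4::'a) \<noteq> 0" using assms(1) mult_eq_0_iff[of "2::'a" 2] by simp
    moreover have "\<gamma> ^ 4 = - (4 * \<alpha>0)" using assms(2) by (simp add: eq_neg_iff_add_eq_0)
    ultimately show ?thesis by simp
  qed
  finally have "((i * \<gamma> ^ 2 / 2) ^ N) ^ 2 = \<alpha>0 ^ N" by (metis power_mult mult.commute)
  then show False using assms(3) by blast
qed

section \<open>The rings \<open>F[u]/\<langle>u\<^sup>2\<rangle>\<close> and \<open>F[i]\<close>\<close>

lemma dual_ring_cring: "cring (dual_ring :: ('a::field \<times> 'a) ring)"
proof (rule cringI)
  show "abelian_group (dual_ring :: ('a \<times> 'a) ring)"
    by (rule abelian_groupI) (auto simp: dual_ring_def intro: exI[of _ "- _"])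
  show "comm_monoid (dual_ring :: ('a \<times> 'a) ring)"
    by (rule comm_monoidI) (auto simp: dual_ring_def algebra_simps)
qed (auto simp: dual_ring_def algebra_simps)

lemma dual_ring_simps [simp]:
  "carrier (dual_ring :: ('a::field \<times> 'a) ring) = UNIV"
  "\<one>\<^bsub>(dual_ring :: ('a \<times> 'a) ring)\<^esub> = (1, 0)"
  "\<zero>\<^bsub>(dual_ring :: ('a \<times> 'a) ring)\<^esub> = (0, 0)"
  "x \<otimes>\<^bsub>(dual_ring :: ('a \<times> 'a) ring)\<^esub> y = (fst x * fst y, fst x * snd y + snd x * fst y)"
  "x \<oplus>\<^bsub>(dual_ring :: ('a \<times> 'a) ring)\<^esub> y = (fst x + fst y, snd x + snd y)"
  by (simp_all add: dual_ring_def)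

lemma dual_ring_minus [simp]: "\<ominus>\<^bsub>(dual_ring :: ('a::field \<times> 'a) ring)\<^esub> x = (- fst x, - snd x)"
proof -
  interpret cring "dual_ring :: ('a \<times> 'a) ring" by (rule dual_ring_cring)
  show ?thesis by (rule minus_equality) auto
qed

text \<open>\<open>F[i]\<close> with \<open>i\<^sup>2 = -1\<close>, where the roots of \<open>q\<^sub>\<plusminus>\<close> live.\<close>

definition gaussian_ring :: "('a::field \<times> 'a) ring" where
  "gaussian_ring = \<lparr>carrier = UNIV,
     monoid.mult = (\<lambda>x y. (fst x * fst y - snd x * snd y, fst x * snd y + snd x * fst y)),
     one = (1, 0),
     ring.zero = (0, 0),
     add = (\<lambda>x y. (fst x + fst y, snd x + snd y))\<rparr>"

lemma gaussian_ring_cring: "cring (gaussian_ring :: ('a::field \<times> 'a) ring)"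
proof (rule cringI)
  show "abelian_group (gaussian_ring :: ('a \<times> 'a) ring)"
    by (rule abelian_groupI) (auto simp: gaussian_ring_def intro: exI[of _ "- _"])
  show "comm_monoid (gaussian_ring :: ('a \<times> 'a) ring)"
    by (rule comm_monoidI) (auto simp: gaussian_ring_def algebra_simps)
qed (auto simp: gaussian_ring_def algebra_simps)

lemma gaussian_ring_simps [simp]:
  "carrier (gaussian_ring :: ('a::field \<times> 'a) ring) = UNIV"
  "\<one>\<^bsub>(gaussian_ring :: ('a \<times> 'a) ring)\<^esub> = (1, 0)"
  "\<zero>\<^bsub>(gaussian_ring :: ('a \<times> 'a) ring)\<^esub> = (0, 0)"
  "x \<otimes>\<^bsub>(gaussian_ring :: ('a \<times> 'a) ring)\<^esub> y
     = (fst x * fst y - snd x * snd y, fst x * snd y + snd x * fst y)"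
  "x \<oplus>\<^bsub>(gaussian_ring :: ('a \<times> 'a) ring)\<^esub> y = (fst x + fst y, snd x + snd y)"
  by (simp_all add: gaussian_ring_def)

lemma gaussian_ring_minus [simp]:
  "\<ominus>\<^bsub>(gaussian_ring :: ('a::field \<times> 'a) ring)\<^esub> x = (- fst x, - snd x)"
proof -
  interpret cring "gaussian_ring :: ('a \<times> 'a) ring" by (rule gaussian_ring_cring)
  show ?thesis by (rule minus_equality) auto
qed

lemma gaussian_ring_pow_const: "(c, 0) [^]\<^bsub>gaussian_ring\<^esub> (k::nat) = (c ^ k, 0 :: 'a::field)"
  by (induct k) simp_all

lemma gaussian_ring_domain:
  assumes "\<not> (\<exists>y. y ^ 2 = (-1 :: 'a::field))"
  shows "domain (gaussian_ring :: ('a \<times> 'a) ring)"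
proof (rule domainI[OF gaussian_ring_cring])
  fix x y :: "'a \<times> 'a"
  assume prod0: "x \<otimes>\<^bsub>gaussian_ring\<^esub> y = \<zero>\<^bsub>gaussian_ring\<^esub>"
  obtain a b c d where x: "x = (a, b)" and y: "y = (c, d)" by fastforce
  have eqs: "a * c - b * d = 0" "a * d + b * c = 0" using prod0 x y by simp_all
  show "x = \<zero>\<^bsub>gaussian_ring\<^esub> \<or> y = \<zero>\<^bsub>gaussian_ring\<^esub>"
  proof (cases "a * a + b * b = 0")
    case True then show ?thesis using x sum_squares_eq_zero_iff[OF assms, of a b] by simp
  next
    case False
    have "(a * a + b * b) * c = a * (a * c - b * d) + b * (a * d + b * c)"
      "(a * a + b * b) * d = a * (a * d + b * c) - b * (a * c - b * d)"
      by (simp_all add: algebra_simps)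
    then have "c = 0" "d = 0" using False by (simp_all only: eqs) simp_all
    then show ?thesis using y by simp
  qed
qed simp

definition mod_u :: "'a::field \<times> 'a \<Rightarrow> 'a \<times> 'a" where "mod_u x = (fst x, 0)"

lemma mod_u_ring_hom_cring:
  "ring_hom_cring (dual_ring :: ('a::field \<times> 'a) ring) gaussian_ring mod_u"
  by (rule ring_hom_cringI[OF dual_ring_cring gaussian_ring_cring])
    (rule ring_hom_memI, auto simp: mod_u_def)

lemma (in domain) nat_pow_eq_zero_imp_zero:
  assumes "x \<in> carrier R" and "x [^] (k::nat) = \<zero>"
  shows "x = \<zero>"
  using assms(2)
proof (induction k)
  case (Suc k)
  then show ?case using assms(1) integral by auto
qed simp

lemma (in ideal) Units_disjoint:
  assumes "I \<noteq> carrier R"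
  shows "I \<inter> Units R = {}"
proof (rule ccontr)
  assume "I \<inter> Units R \<noteq> {}"
  then obtain v where "v \<in> I" "v \<in> Units R" by blast
  then have "inv v \<otimes> v \<in> I" by (intro I_l_closed) auto
  then show False using \<open>v \<in> Units R\<close> assms one_imp_carrier by simp
qed

lemma (in cring) one_minus_nilpotent_Units:
  assumes z: "z \<in> carrier R" and nil: "z [^] (k::nat) = \<zero>"
  shows "\<one> \<ominus> z \<in> Units R"
proof -
  \<comment> \<open>\<open>1 - z\<^sup>2 = (1 - z)(1 + z)\<close>, so it suffices that \<open>1 - z\<^bsup>2^j\<^esup>\<close> is a unit, and \<open>k < 2^k\<close>.\<close>
  have "\<one> \<ominus> z \<in> Units R" if "z \<in> carrier R" "z [^] ((2::nat) ^ j) = \<zero>" for z j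
    using that
  proof (induction j arbitrary: z)
    case 0 then show ?case by (simp add: minus_eq)
  next
    case (Suc j)
    have "(z \<otimes> z) [^] ((2::nat) ^ j) = z [^] ((2::nat) ^ Suc j)"
      using Suc.prems(1) by (simp add: nat_pow_distrib nat_pow_mult mult_2)
    then have "\<one> \<ominus> z \<otimes> z \<in> Units R" using Suc by simp
    moreover have "\<one> \<ominus> z \<otimes> z = (\<one> \<ominus> z) \<otimes> (\<one> \<oplus> z)" using Suc.prems(1) by algebra
    ultimately show ?case using Suc.prems(1) unit_factor[of "\<one> \<ominus> z" "\<one> \<oplus> z"] by simp
  qed
  moreover have "z [^] ((2::nat) ^ k) = \<zero>"
  proof -
    have "z [^] ((2::nat) ^ k) = z [^] k \<otimes> z [^] (2 ^ k - k)"
      using less_exp[of k] z by (simp add: nat_pow_mult)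
    then show ?thesis using nil z by simp
  qed
  ultimately show ?thesis using z by blast
qed

lemma (in cring) Units_if_invertible_modulo_nilpotent_factors:
  assumes carr: "g \<in> carrier R" "q1 \<in> carrier R" "q2 \<in> carrier R"
      "W1 \<in> carrier R" "B1 \<in> carrier R" "W2 \<in> carrier R" "B2 \<in> carrier R"
    and nil: "(q1 \<otimes> q2) [^] (k::nat) = \<zero>"
    and inv1: "g \<otimes> W1 = \<one> \<oplus> q1 \<otimes> B1"
    and inv2: "g \<otimes> W2 = \<one> \<oplus> q2 \<otimes> B2"
  shows "g \<in> Units R"
proof -
  define V where "V = W1 \<oplus> W2 \<ominus> g \<otimes> W1 \<otimes> W2"
  have "g \<otimes> V = g \<otimes> W1 \<oplus> g \<otimes> W2 \<ominus> (g \<otimes> W1) \<otimes> (g \<otimes> W2)"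
    unfolding V_def using carr by algebra
  also have "\<dots> = \<one> \<ominus> (q1 \<otimes> q2) \<otimes> (B1 \<otimes> B2)"
    unfolding inv1 inv2 using carr by algebra
  finally have gV: "g \<otimes> V = \<one> \<ominus> (q1 \<otimes> q2) \<otimes> (B1 \<otimes> B2)" .
  have "((q1 \<otimes> q2) \<otimes> (B1 \<otimes> B2)) [^] k = \<zero>"
    using carr nil by (simp add: nat_pow_distrib)
  then have "g \<otimes> V \<in> Units R"
    unfolding gV using carr by (intro one_minus_nilpotent_Units) simp_all
  then show ?thesis using carr unit_factor[of g V] by (simp add: V_def)
qed

lemma (in ring) ideal_subset_Un_ideals:
  assumes "ideal M R" "ideal I R" "ideal J R" and "M \<subseteq> I \<union> J"
  shows "M \<subseteq> I \<or> M \<subseteq> J"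
proof (rule ccontr)
  interpret M: ideal M R by fact
  interpret I: ideal I R by fact
  interpret J: ideal J R by fact
  assume "\<not> (M \<subseteq> I \<or> M \<subseteq> J)"
  then obtain a b where ab: "a \<in> M" "a \<notin> I" "b \<in> M" "b \<notin> J" by blast
  then have aJ: "a \<in> J" and bI: "b \<in> I" using assms(4) by blast+
  have carr: "a \<in> carrier R" "b \<in> carrier R" using ab M.a_subset by blast+
  have "a \<oplus> b \<in> I \<union> J" using ab assms(4) M.a_closed by blast
  then show False
  proof
    assume "a \<oplus> b \<in> I"
    then have "(a \<oplus> b) \<ominus> b \<in> I" using bI by (simp add: I.a_closed I.a_inv_closed minus_eq)
    moreover have "(a \<oplus> b) \<ominus> b = a" using carr by algebra
    ultimately show False using ab by simp
  next
    assume "a \<oplus> b \<in> J"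
    then have "(a \<oplus> b) \<ominus> a \<in> J" using aJ by (simp add: J.a_closed J.a_inv_closed minus_eq)
    moreover have "(a \<oplus> b) \<ominus> a = b" using carr by algebra
    ultimately show False using ab by simp
  qed
qed

lemma (in cring) maximal_ideals_if_nonunits_eq_Un:
  assumes I: "ideal I R" and J: "ideal J R" and incomparable: "\<not> I \<subseteq> J" "\<not> J \<subseteq> I"
    and nonunits: "carrier R - Units R = I \<union> J"
  shows "{M. maximalideal M R} = {I, J}"
proof -
  have proper_in: "M \<subseteq> I \<or> M \<subseteq> J" if "ideal M R" "M \<noteq> carrier R" for M
  proof -
    have "M \<subseteq> I \<union> J"
      using ideal.Units_disjoint[OF that] ideal.axioms(1)[OF that(1)] nonunits
      by (auto dest: additive_subgroup.a_Hcarr)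
    then show ?thesis using ideal_subset_Un_ideals that(1) I J by blast
  qed
  have one_notin: "\<one> \<notin> I" "\<one> \<notin> J" using nonunits by auto
  have maximal: "maximalideal K R" if K: "ideal K R" "\<one> \<notin> K" and L: "ideal L R"
      and incomp: "\<not> K \<subseteq> L" "\<not> L \<subseteq> K" and "proper_in_KL": "\<And>M. ideal M R \<Longrightarrow> M \<noteq> carrier R \<Longrightarrow> M \<subseteq> K \<or> M \<subseteq> L"
    for K L
  proof (rule maximalidealI[OF K(1)])
    show "carrier R \<noteq> K" using K(2) by auto
    fix M assume "ideal M R" "K \<subseteq> M" "M \<subseteq> carrier R"
    then show "M = K \<or> M = carrier R"
      using proper_in_KL[of M] incomp by blast
  qed
  have "maximalideal I R" "maximalideal J R"
    using maximal[OF I one_notin(1) J incomparable] maximal[OF J one_notin(2) I incomparable(2,1)]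
      proper_in by blast+
  moreover have "M = I \<or> M = J" if "maximalideal M R" for M
  proof -
    interpret maximalideal M R by fact
    have "M \<subseteq> I \<or> M \<subseteq> J" using proper_in is_ideal I_notcarr by blast
    moreover have "I \<noteq> carrier R" "J \<noteq> carrier R" using one_notin by auto
    ultimately show ?thesis
      using I_maximal[OF I] I_maximal[OF J] ideal.axioms(1)[OF I] ideal.axioms(1)[OF J]
      by (metis additive_subgroup.a_subset)
  qed
  ultimately show ?thesis by blast
qed

lemma (in ring_hom_ring) the_elem_image_rcos:
  assumes I: "ideal I R" and vanish: "\<And>i. i \<in> I \<Longrightarrow> h i = \<zero>\<^bsub>S\<^esub>" and x: "x \<in> carrier R"
  shows "the_elem (h ` (I +> x)) = h x"
proof -
  interpret I: ideal I R by (rule I)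
  have "h (i \<oplus> x) = h x" if "i \<in> I" for i
    using that x vanish[OF that] I.a_Hcarr[OF that] by simp
  moreover have "x \<in> I +> x" using x I.a_rcos_self by blast
  ultimately have "h ` (I +> x) = {h x}" unfolding a_r_coset_def' by blast
  then show ?thesis by simp
qed

lemma (in ring_hom_ring) the_elem_image_ring_hom:
  assumes I: "ideal I R" and vanish: "\<And>i. i \<in> I \<Longrightarrow> h i = \<zero>\<^bsub>S\<^esub>"
  shows "(\<lambda>C. the_elem (h ` C)) \<in> ring_hom (R Quot I) S"
proof -
  interpret I: ideal I R by (rule I)
  interpret Q: ring_hom_ring R "R Quot I" "(+>) I" by (rule I.rcos_ring_hom_ring)
  have carrier: "\<exists>x\<in>carrier R. C = I +> x" if "C \<in> carrier (R Quot I)" for C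
    using that unfolding FactRing_def A_RCOSETS_def' by simp
  have img: "the_elem (h ` (I +> x)) = h x" if "x \<in> carrier R" for x
    using I vanish that by (rule the_elem_image_rcos)
  show ?thesis
  proof (rule ring_hom_memI)
    fix C assume C: "C \<in> carrier (R Quot I)"
    obtain x where x: "x \<in> carrier R" "C = I +> x" using carrier[OF C] ..
    show "the_elem (h ` C) \<in> carrier S" unfolding x(2) img[OF x(1)] using x(1) by simp
  next
    show "the_elem (h ` \<one>\<^bsub>R Quot I\<^esub>) = \<one>\<^bsub>S\<^esub>"
      unfolding FactRing_def using img[OF R.one_closed] by simp
  next
    fix C D assume C: "C \<in> carrier (R Quot I)" and D: "D \<in> carrier (R Quot I)"
    obtain x where x: "x \<in> carrier R" "C = I +> x" using carrier[OF C] ..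
    obtain y where y: "y \<in> carrier R" "D = I +> y" using carrier[OF D] ..
    have mult: "(I +> x) \<otimes>\<^bsub>R Quot I\<^esub> (I +> y) = I +> (x \<otimes> y)"
      and add: "(I +> x) \<oplus>\<^bsub>R Quot I\<^esub> (I +> y) = I +> (x \<oplus> y)"
      using Q.hom_mult[OF x(1) y(1)] Q.hom_add[OF x(1) y(1)] by simp_all
    show "the_elem (h ` (C \<otimes>\<^bsub>R Quot I\<^esub> D)) = the_elem (h ` C) \<otimes>\<^bsub>S\<^esub> the_elem (h ` D)"
      unfolding x(2) y(2) mult img[OF x(1)] img[OF y(1)] img[OF R.m_closed[OF x(1) y(1)]] using x y by simp
    show "the_elem (h ` (C \<oplus>\<^bsub>R Quot I\<^esub> D)) = the_elem (h ` C) \<oplus>\<^bsub>S\<^esub> the_elem (h ` D)"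
      unfolding x(2) y(2) add img[OF x(1)] img[OF y(1)] img[OF R.a_closed[OF x(1) y(1)]] using x y by simp
qed
qed

section \<open>The quotient ring \<open>R[x]/\<langle>x\<^sup>n - (\<alpha> + \<beta> u)\<rangle>\<close>\<close>

locale Rab_quotient =
  fixes n :: nat and \<alpha> \<beta> :: "'a::field"
begin

sublocale Rx: UP_cring "dual_ring :: ('a \<times> 'a) ring" Rx
  by (simp add: UP_cring_def dual_ring_cring)

abbreviation "Q \<equiv> Rab n \<alpha> \<beta>"
abbreviation "cl \<equiv> cls n \<alpha> \<beta>"
abbreviation "gen_ideal \<equiv> Idl\<^bsub>Rx\<^esub> {gen_poly n \<alpha> \<beta>}"

lemma gen_poly_closed: "gen_poly n \<alpha> \<beta> \<in> carrier Rx"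
  by (simp add: gen_poly_def)

lemma gen_ideal_ideal: "ideal gen_ideal Rx"
  by (rule Rx.genideal_ideal) (simp add: gen_poly_closed)

sublocale Q: cring Q
  unfolding Rab_def by (rule ideal.quotient_is_cring[OF gen_ideal_ideal Rx.P.is_cring])

sublocale cl: ring_hom_cring Rx Q cl
proof -
  have "cl = (+>\<^bsub>Rx\<^esub>) gen_ideal" by (rule ext) (simp add: cls_def)
  then show "ring_hom_cring Rx Q cl"
    unfolding Rab_def by (simp add: ideal.rcos_ring_hom_cring[OF gen_ideal_ideal Rx.P.is_cring])
qed

lemma Rab_carrier_cls: "g \<in> carrier Q \<Longrightarrow> \<exists>P\<in>carrier Rx. g = cl P"
  by (auto simp: Rab_def cls_def FactRing_simps)

lemma cls_gen_poly: "cl (gen_poly n \<alpha> \<beta>) = \<zero>\<^bsub>Q\<^esub>"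
proof -
  interpret ideal gen_ideal Rx by (rule gen_ideal_ideal)
  have "gen_poly n \<alpha> \<beta> \<in> gen_ideal" by (rule Rx.genideal_self') (simp add: gen_poly_closed)
  then show ?thesis by (simp add: Rab_def cls_def FactRing_def a_rcos_const)
qed

definition const_cls :: "'a \<Rightarrow> (nat \<Rightarrow> 'a \<times> 'a) set"
  where "const_cls c = cl (UnivPoly.monom Rx (c, 0) 0)"
definition "x_cls = cl (UnivPoly.monom Rx (1, 0) 1)"
definition "u_cls = cl (UnivPoly.monom Rx (0, 1) 0)"

lemma const_cls_closed [simp]: "const_cls c \<in> carrier Q"
  and x_cls_closed [simp]: "x_cls \<in> carrier Q"
  and u_cls_closed [simp]: "u_cls \<in> carrier Q"
  by (simp_all add: const_cls_def x_cls_def u_cls_def)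

lemma const_cls_add: "const_cls (a + b) = const_cls a \<oplus>\<^bsub>Q\<^esub> const_cls b"
  using Rx.monom_add[of "(a, 0)" "(b, 0)" 0] by (simp add: const_cls_def)

lemma const_cls_mult: "const_cls (a * b) = const_cls a \<otimes>\<^bsub>Q\<^esub> const_cls b"
  using Rx.monom_mult[of "(a, 0)" "(b, 0)" 0 0] by (simp add: const_cls_def)

lemma const_cls_one: "const_cls 1 = \<one>\<^bsub>Q\<^esub>"
  using Rx.monom_one by (simp add: const_cls_def)

lemma const_cls_zero: "const_cls 0 = \<zero>\<^bsub>Q\<^esub>"
  using Rx.monom_zero[of 0] by (simp add: const_cls_def)

lemma const_cls_minus: "const_cls (- a) = \<ominus>\<^bsub>Q\<^esub> const_cls a"
  using Rx.monom_a_inv[of "(a, 0)" 0] by (simp add: const_cls_def)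

lemma const_cls_diff: "const_cls (a - b) = const_cls a \<ominus>\<^bsub>Q\<^esub> const_cls b"
  using const_cls_add[of a "- b"] const_cls_minus[of b] by (simp add: Q.minus_eq)

lemma cls_monom_one: "cl (UnivPoly.monom Rx (1, 0) k) = x_cls [^]\<^bsub>Q\<^esub> k"
proof -
  have "UnivPoly.monom Rx (1::'a, 0::'a) 1 [^]\<^bsub>Rx\<^esub> k = UnivPoly.monom Rx ((1, 0) [^]\<^bsub>dual_ring\<^esub> k) (1 * k)"
    by (rule Rx.monom_pow) simp
  then have "UnivPoly.monom Rx (1::'a, 0::'a) k = UnivPoly.monom Rx (1, 0) 1 [^]\<^bsub>Rx\<^esub> k"
    using Rx.R.nat_pow_one by simp
  then show ?thesis by (simp add: x_cls_def)
qed

lemma cls_monom: "cl (UnivPoly.monom Rx (a, b) k)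
    = (const_cls a \<oplus>\<^bsub>Q\<^esub> const_cls b \<otimes>\<^bsub>Q\<^esub> u_cls) \<otimes>\<^bsub>Q\<^esub> x_cls [^]\<^bsub>Q\<^esub> k"
proof -
  have "UnivPoly.monom Rx (a, b) k = UnivPoly.monom Rx (a, b) 0 \<otimes>\<^bsub>Rx\<^esub> UnivPoly.monom Rx (1, 0) k"
    using Rx.monom_mult[of "(a, b)" "(1, 0)" 0 k] by simp
  moreover have "UnivPoly.monom Rx (a, b) 0
      = UnivPoly.monom Rx (a, 0) 0 \<oplus>\<^bsub>Rx\<^esub> UnivPoly.monom Rx (b, 0) 0 \<otimes>\<^bsub>Rx\<^esub> UnivPoly.monom Rx (0, 1) 0"
    using Rx.monom_mult[of "(b, 0)" "(0, 1)" 0 0] Rx.monom_add[of "(a, 0)" "(0, b)" 0] by simp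
  ultimately show ?thesis by (simp add: const_cls_def u_cls_def cls_monom_one)
qed

lemma cls_monom_const: "cl (UnivPoly.monom Rx (c, 0) k) = const_cls c \<otimes>\<^bsub>Q\<^esub> x_cls [^]\<^bsub>Q\<^esub> k"
  using cls_monom[of c 0 k] by (simp add: const_cls_zero)

lemma u_cls_square: "u_cls \<otimes>\<^bsub>Q\<^esub> u_cls = \<zero>\<^bsub>Q\<^esub>"
proof -
  have "UnivPoly.monom Rx (0::'a, 1::'a) 0 \<otimes>\<^bsub>Rx\<^esub> UnivPoly.monom Rx (0, 1) 0 = \<zero>\<^bsub>Rx\<^esub>"
    using Rx.monom_mult[of "(0, 1)" "(0, 1)" 0 0] Rx.monom_zero by simp
  then show ?thesis unfolding u_cls_def
    by (metis cl.hom_mult cl.hom_zero Rx.monom_closed UNIV_I dual_ring_simps(1))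
qed

lemma x_cls_pow_n: "x_cls [^]\<^bsub>Q\<^esub> n = const_cls \<alpha> \<oplus>\<^bsub>Q\<^esub> const_cls \<beta> \<otimes>\<^bsub>Q\<^esub> u_cls"
proof -
  have "x_cls [^]\<^bsub>Q\<^esub> n \<ominus>\<^bsub>Q\<^esub> (const_cls \<alpha> \<oplus>\<^bsub>Q\<^esub> const_cls \<beta> \<otimes>\<^bsub>Q\<^esub> u_cls) = \<zero>\<^bsub>Q\<^esub>"
    using cls_gen_poly cls_monom[of \<alpha> \<beta> 0] cls_monom_one[of n] by (simp add: gen_poly_def)
  then show ?thesis by (simp add: Q.r_right_minus_eq)
qed

lemma x_cls_square: "x_cls [^]\<^bsub>Q\<^esub> (2::nat) = x_cls \<otimes>\<^bsub>Q\<^esub> x_cls"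
  by (simp add: numeral_2_eq_2)

definition "quad c d = cl (quad_poly c d)"

lemma quad_eq: "quad c d = x_cls [^]\<^bsub>Q\<^esub> (2::nat) \<oplus>\<^bsub>Q\<^esub> const_cls c \<otimes>\<^bsub>Q\<^esub> x_cls \<oplus>\<^bsub>Q\<^esub> const_cls d"
  using cls_monom_const[of c 1] cls_monom_const[of d 0] cls_monom_one[of 2]
  by (simp add: quad_def quad_poly_def const_cls_one)

lemma quad_closed [simp]: "quad c d \<in> carrier Q"
  by (simp add: quad_eq)

lemma cls_quart_poly: "cl (quart_poly c) = x_cls [^]\<^bsub>Q\<^esub> (4::nat) \<ominus>\<^bsub>Q\<^esub> const_cls c"
  using cls_monom_const[of c 0] cls_monom_one[of 4] by (simp add: quart_poly_def)

lemma Rab_induct [consumes 1, case_names zero one add mult_x mult_const mult_u]: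
  assumes g: "g \<in> carrier Q"
    and zero: "P \<zero>\<^bsub>Q\<^esub>" and one: "P \<one>\<^bsub>Q\<^esub>"
    and add: "\<And>a b. a \<in> carrier Q \<Longrightarrow> b \<in> carrier Q \<Longrightarrow> P a \<Longrightarrow> P b \<Longrightarrow> P (a \<oplus>\<^bsub>Q\<^esub> b)"
    and mult_x: "\<And>a. a \<in> carrier Q \<Longrightarrow> P a \<Longrightarrow> P (a \<otimes>\<^bsub>Q\<^esub> x_cls)"
    and mult_const: "\<And>a c. a \<in> carrier Q \<Longrightarrow> P a \<Longrightarrow> P (const_cls c \<otimes>\<^bsub>Q\<^esub> a)"
    and mult_u: "\<And>a. a \<in> carrier Q \<Longrightarrow> P a \<Longrightarrow> P (u_cls \<otimes>\<^bsub>Q\<^esub> a)"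
  shows "P g"
proof -
  define S where "S = {a \<in> carrier Q. P a}"
  have S_add: "a \<oplus>\<^bsub>Q\<^esub> b \<in> S" if "a \<in> S" "b \<in> S" for a b
    using that add by (simp add: S_def)
  have x_pow: "x_cls [^]\<^bsub>Q\<^esub> i \<in> S" for i :: nat
    by (induct i) (simp_all add: S_def one mult_x)
  have monom: "cl (UnivPoly.monom Rx c i) \<in> S" for c i
  proof -
    obtain a b where c: "c = (a, b)" by fastforce
    have "cl (UnivPoly.monom Rx c i) = const_cls a \<otimes>\<^bsub>Q\<^esub> x_cls [^]\<^bsub>Q\<^esub> i
        \<oplus>\<^bsub>Q\<^esub> u_cls \<otimes>\<^bsub>Q\<^esub> (const_cls b \<otimes>\<^bsub>Q\<^esub> x_cls [^]\<^bsub>Q\<^esub> i)"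
      unfolding c cls_monom
      using Q.nat_pow_closed[OF x_cls_closed, of i] const_cls_closed[of a] const_cls_closed[of b]
        u_cls_closed by algebra
    then show ?thesis using x_pow S_add mult_const mult_u by (simp add: S_def)
  qed
  obtain F where F: "F \<in> carrier Rx" "g = cl F" using Rab_carrier_cls[OF g] by blast
  have "g = cl (finsum Rx (\<lambda>i. UnivPoly.monom Rx (UnivPoly.coeff Rx F i) i) {..deg dual_ring F})"
    using Rx.up_repr[OF F(1)] F(2) by simp
  also have "\<dots> = finsum Q (cl \<circ> (\<lambda>i. UnivPoly.monom Rx (UnivPoly.coeff Rx F i) i)) {..deg dual_ring F}"
    by (rule cl.hom_finsum) auto
  also have "\<dots> \<in> S"
  proof (induction rule: finite_induct[OF finite_atMost])
    case 1 then show ?case by (simp add: S_def zero)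
  next
    case (2 i A)
    then show ?case using monom S_add by (simp add: Q.finsum_insert S_def)
  qed
  finally show ?thesis by (simp add: S_def)
qed

definition embed_poly :: "'a poly \<Rightarrow> (nat \<Rightarrow> 'a \<times> 'a) set" where
  "embed_poly p = fold_coeffs (\<lambda>a acc. const_cls a \<oplus>\<^bsub>Q\<^esub> x_cls \<otimes>\<^bsub>Q\<^esub> acc) p \<zero>\<^bsub>Q\<^esub>"

lemma embed_poly_0 [simp]: "embed_poly 0 = \<zero>\<^bsub>Q\<^esub>"
  by (simp add: embed_poly_def)

lemma embed_poly_pCons: "embed_poly (pCons a p) = const_cls a \<oplus>\<^bsub>Q\<^esub> x_cls \<otimes>\<^bsub>Q\<^esub> embed_poly p"
proof (cases "p = 0 \<and> a = 0")
  case True then show ?thesis by (simp add: const_cls_zero)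
next
  case False then show ?thesis by (auto simp: embed_poly_def)
qed

lemma embed_poly_closed [simp]: "embed_poly p \<in> carrier Q"
  by (induct p) (simp_all add: embed_poly_pCons)

lemma embed_poly_add: "embed_poly (p + q) = embed_poly p \<oplus>\<^bsub>Q\<^esub> embed_poly q"
proof (induct p q rule: poly_induct2)
  case (pCons a p b q)
  then show ?case
    by (simp add: embed_poly_pCons const_cls_add) (simp add: Q.r_distr Q.a_ac)
qed simp

lemma embed_poly_smult: "embed_poly (smult c p) = const_cls c \<otimes>\<^bsub>Q\<^esub> embed_poly p"
proof (induct p)
  case (pCons a p)
  then show ?case
    by (simp add: embed_poly_pCons const_cls_mult Q.r_distr) (simp add: Q.m_ac)
qed simp

lemma embed_poly_mult: "embed_poly (p * q) = embed_poly p \<otimes>\<^bsub>Q\<^esub> embed_poly q"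
proof (induct p)
  case (pCons a p)
  then show ?case
    by (simp add: embed_poly_pCons embed_poly_add embed_poly_smult const_cls_zero Q.l_distr)
      (simp add: Q.m_ac)
qed simp

lemma embed_poly_const: "embed_poly [:c:] = const_cls c"
  by (simp add: embed_poly_pCons)

lemma embed_poly_one: "embed_poly 1 = \<one>\<^bsub>Q\<^esub>"
  using embed_poly_const[of 1] by (simp add: const_cls_one one_pCons)

lemma embed_poly_pow: "embed_poly (p ^ k) = embed_poly p [^]\<^bsub>Q\<^esub> k"
  by (induct k) (simp_all add: embed_poly_one embed_poly_mult Q.m_comm)

lemma embed_poly_monom: "embed_poly (Polynomial.monom 1 k) = x_cls [^]\<^bsub>Q\<^esub> k"
  by (induct k)
    (simp_all add: monom_0 monom_Suc embed_poly_pCons embed_poly_const const_cls_one const_cls_zero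
      Q.m_comm)

lemma embed_poly_minus: "embed_poly (- p) = \<ominus>\<^bsub>Q\<^esub> embed_poly p"
  using embed_poly_smult[of "-1" p] const_cls_minus[of 1] by (simp add: const_cls_one Q.l_minus)

lemma quad_normal_form:
  assumes u: "u_cls \<in> PIdl\<^bsub>Q\<^esub> quad c d" and g: "g \<in> carrier Q"
  obtains r s h where "h \<in> carrier Q"
    and "g = const_cls r \<oplus>\<^bsub>Q\<^esub> const_cls s \<otimes>\<^bsub>Q\<^esub> x_cls \<oplus>\<^bsub>Q\<^esub> quad c d \<otimes>\<^bsub>Q\<^esub> h"
proof -
  let ?q = "quad c d"
  let ?nf = "\<lambda>r s h. const_cls r \<oplus>\<^bsub>Q\<^esub> const_cls s \<otimes>\<^bsub>Q\<^esub> x_cls \<oplus>\<^bsub>Q\<^esub> ?q \<otimes>\<^bsub>Q\<^esub> h"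
  obtain w where w: "w \<in> carrier Q" "u_cls = w \<otimes>\<^bsub>Q\<^esub> ?q"
    using u by (auto simp: cgenideal_def)
  have nf_intro: "\<exists>r s h. h \<in> carrier Q \<and> a = ?nf r s h" if "h \<in> carrier Q" "a = ?nf r s h" for a r s h
    using that by blast
  have "\<exists>r s h. h \<in> carrier Q \<and> g = ?nf r s h"
    using g
  proof (induction rule: Rab_induct)
    case zero
    have "\<zero>\<^bsub>Q\<^esub> = ?nf 0 0 \<zero>\<^bsub>Q\<^esub>" by (simp add: const_cls_zero)
    then show ?case by (rule nf_intro[rotated]) simp
  next
    case one
    have "\<one>\<^bsub>Q\<^esub> = ?nf 1 0 \<zero>\<^bsub>Q\<^esub>" by (simp add: const_cls_zero const_cls_one)
    then show ?case by (rule nf_intro[rotated]) simp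
  next
    case (add a b)
    then obtain r s h r' s' h' where h: "h \<in> carrier Q" "h' \<in> carrier Q"
      and ab: "a = ?nf r s h" "b = ?nf r' s' h'" by blast
    have "a \<oplus>\<^bsub>Q\<^esub> b = ?nf (r + r') (s + s') (h \<oplus>\<^bsub>Q\<^esub> h')"
      unfolding ab const_cls_add
      using h const_cls_closed[of r] const_cls_closed[of s] const_cls_closed[of r']
        const_cls_closed[of s'] x_cls_closed quad_closed[of c d] by algebra
    then show ?case by (rule nf_intro[rotated]) (simp add: h)
  next
    case (mult_x a)
    then obtain r s h where h: "h \<in> carrier Q" and a: "a = ?nf r s h" by blast
    \<comment> \<open>\<open>s x\<^sup>2 \<equiv> - s c x - s d\<close> modulo \<open>q\<close>\<close>
    have "a \<otimes>\<^bsub>Q\<^esub> x_cls = ?nf (- (s * d)) (r - s * c) (const_cls s \<oplus>\<^bsub>Q\<^esub> x_cls \<otimes>\<^bsub>Q\<^esub> h)"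
      unfolding a quad_eq const_cls_minus const_cls_diff const_cls_mult x_cls_square
      using h const_cls_closed[of r] const_cls_closed[of s] const_cls_closed[of c]
        const_cls_closed[of d] x_cls_closed by algebra
    then show ?case by (rule nf_intro[rotated]) (simp add: h)
  next
    case (mult_const a e)
    then obtain r s h where h: "h \<in> carrier Q" and a: "a = ?nf r s h" by blast
    have "const_cls e \<otimes>\<^bsub>Q\<^esub> a = ?nf (e * r) (e * s) (const_cls e \<otimes>\<^bsub>Q\<^esub> h)"
      unfolding a const_cls_mult
      using h const_cls_closed[of r] const_cls_closed[of s] const_cls_closed[of e]
        x_cls_closed quad_closed[of c d] by algebra
    then show ?case by (rule nf_intro[rotated]) (simp add: h)
  next
    case (mult_u a)
    have "u_cls \<otimes>\<^bsub>Q\<^esub> a = ?nf 0 0 (w \<otimes>\<^bsub>Q\<^esub> a)"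
      unfolding w(2) const_cls_zero using mult_u(1) w(1) x_cls_closed quad_closed[of c d] by algebra
    then show ?case by (rule nf_intro[rotated]) (simp add: mult_u(1) w(1))
  qed
  then show ?thesis using that by blast
qed

lemma quad_invertible_modulo:
  assumes h: "h \<in> carrier Q" and norm: "r * r - c * r * s + s * s * d \<noteq> 0"
  obtains W B where "W \<in> carrier Q" "B \<in> carrier Q"
    and "(const_cls r \<oplus>\<^bsub>Q\<^esub> const_cls s \<otimes>\<^bsub>Q\<^esub> x_cls \<oplus>\<^bsub>Q\<^esub> quad c d \<otimes>\<^bsub>Q\<^esub> h) \<otimes>\<^bsub>Q\<^esub> W
      = \<one>\<^bsub>Q\<^esub> \<oplus>\<^bsub>Q\<^esub> quad c d \<otimes>\<^bsub>Q\<^esub> B"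
proof -
  define N where "N = r * r - c * r * s + s * s * d"
  define P where "P = const_cls r \<oplus>\<^bsub>Q\<^esub> const_cls s \<otimes>\<^bsub>Q\<^esub> x_cls"
  define P' where "P' = const_cls r \<ominus>\<^bsub>Q\<^esub> const_cls s \<otimes>\<^bsub>Q\<^esub> const_cls c \<ominus>\<^bsub>Q\<^esub> const_cls s \<otimes>\<^bsub>Q\<^esub> x_cls"
  define W where "W = const_cls (1 / N) \<otimes>\<^bsub>Q\<^esub> P'"
  define B where "B = h \<otimes>\<^bsub>Q\<^esub> W \<ominus>\<^bsub>Q\<^esub> const_cls (1 / N) \<otimes>\<^bsub>Q\<^esub> (const_cls s \<otimes>\<^bsub>Q\<^esub> const_cls s)"
  have closed: "P \<in> carrier Q" "P' \<in> carrier Q" "W \<in> carrier Q" "B \<in> carrier Q"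
    using h by (simp_all add: P_def P'_def W_def B_def)
  have inv: "const_cls (1 / N) \<otimes>\<^bsub>Q\<^esub> const_cls N = \<one>\<^bsub>Q\<^esub>"
    using norm by (simp add: N_def const_cls_one flip: const_cls_mult)
  \<comment> \<open>\<open>P'\<close> is the conjugate of \<open>P = r + s x\<close> modulo \<open>q\<close>, and \<open>N\<close> is the norm of \<open>P\<close>\<close>
  have norm_eq: "P \<otimes>\<^bsub>Q\<^esub> P' = const_cls N \<ominus>\<^bsub>Q\<^esub> (const_cls s \<otimes>\<^bsub>Q\<^esub> const_cls s) \<otimes>\<^bsub>Q\<^esub> quad c d"
    unfolding P_def P'_def N_def quad_eq x_cls_square const_cls_add const_cls_diff const_cls_mult
    using const_cls_closed[of r] const_cls_closed[of s] const_cls_closed[of c]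
      const_cls_closed[of d] x_cls_closed by algebra
  have "(P \<oplus>\<^bsub>Q\<^esub> quad c d \<otimes>\<^bsub>Q\<^esub> h) \<otimes>\<^bsub>Q\<^esub> W
      = const_cls (1 / N) \<otimes>\<^bsub>Q\<^esub> (P \<otimes>\<^bsub>Q\<^esub> P') \<oplus>\<^bsub>Q\<^esub> quad c d \<otimes>\<^bsub>Q\<^esub> (h \<otimes>\<^bsub>Q\<^esub> W)"
    unfolding W_def using closed h const_cls_closed[of "1 / N"] quad_closed[of c d] by algebra
  also have "\<dots> = const_cls (1 / N) \<otimes>\<^bsub>Q\<^esub> const_cls N \<oplus>\<^bsub>Q\<^esub> quad c d \<otimes>\<^bsub>Q\<^esub> B"
    unfolding norm_eq B_def
    using closed h const_cls_closed[of "1 / N"] const_cls_closed[of N] const_cls_closed[of s]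
      quad_closed[of c d] by algebra
  finally show ?thesis using that closed(3,4) by (simp add: inv P_def)
qed

lemma invertible_modulo_quad_if_notin:
  assumes minus_one: "\<not> (\<exists>y. y ^ 2 = (-1 :: 'a))" and "c \<noteq> 0"
    and u: "u_cls \<in> PIdl\<^bsub>Q\<^esub> quad c (c ^ 2 / 2)"
    and g: "g \<in> carrier Q" "g \<notin> PIdl\<^bsub>Q\<^esub> quad c (c ^ 2 / 2)"
  obtains W B where "W \<in> carrier Q" "B \<in> carrier Q"
    and "g \<otimes>\<^bsub>Q\<^esub> W = \<one>\<^bsub>Q\<^esub> \<oplus>\<^bsub>Q\<^esub> quad c (c ^ 2 / 2) \<otimes>\<^bsub>Q\<^esub> B"
proof -
  obtain r s h where h: "h \<in> carrier Q"
    and g_eq: "g = const_cls r \<oplus>\<^bsub>Q\<^esub> const_cls s \<otimes>\<^bsub>Q\<^esub> x_cls \<oplus>\<^bsub>Q\<^esub> quad c (c ^ 2 / 2) \<otimes>\<^bsub>Q\<^esub> h"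
    using quad_normal_form[OF u g(1)] .
  have "r * r - c * r * s + s * s * (c ^ 2 / 2) \<noteq> 0"
  proof
    assume "r * r - c * r * s + s * s * (c ^ 2 / 2) = 0"
    then have "r = 0 \<and> s = 0" using quadratic_norm_eq_zero_imp[OF minus_one \<open>c \<noteq> 0\<close>] by blast
    then have "g = h \<otimes>\<^bsub>Q\<^esub> quad c (c ^ 2 / 2)" using g_eq h by (simp add: const_cls_zero Q.m_comm)
    then show False using g(2) h by (auto simp: cgenideal_def)
  qed
  then show ?thesis using quad_invertible_modulo[OF h] that unfolding g_eq by blast
qed

definition "eval_at t = eval (dual_ring :: ('a \<times> 'a) ring) gaussian_ring mod_u t"

lemma eval_at_ring_hom_cring: "ring_hom_cring Rx gaussian_ring (eval_at t)"
proof -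
  interpret UP_pre_univ_prop "dual_ring :: ('a \<times> 'a) ring" gaussian_ring mod_u Rx
    by (intro UP_pre_univ_prop.intro UP_cring.intro mod_u_ring_hom_cring dual_ring_cring)
  show ?thesis unfolding eval_at_def
    by (rule ring_hom_cringI[OF Rx.P.is_cring gaussian_ring_cring eval_ring_hom]) simp
qed

lemma eval_at_monom: "eval_at t (UnivPoly.monom Rx (a, b) k) = (a, 0) \<otimes>\<^bsub>gaussian_ring\<^esub> t [^]\<^bsub>gaussian_ring\<^esub> k"
proof -
  interpret UP_pre_univ_prop "dual_ring :: ('a \<times> 'a) ring" gaussian_ring mod_u Rx
    by (intro UP_pre_univ_prop.intro UP_cring.intro mod_u_ring_hom_cring dual_ring_cring)
  show ?thesis unfolding eval_at_def by (subst eval_monom) (simp_all add: mod_u_def)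
qed

definition "Rab_eval t C = the_elem (eval_at t ` C)"

context
  fixes t :: "'a \<times> 'a"
  assumes t_pow_n: "t [^]\<^bsub>gaussian_ring\<^esub> n = (\<alpha>, 0)"
begin

interpretation ev: ring_hom_cring Rx gaussian_ring "eval_at t"
  by (rule eval_at_ring_hom_cring)

lemma eval_at_gen_ideal: "P \<in> gen_ideal \<Longrightarrow> eval_at t P = (0, 0)"
proof -
  have "eval_at t (gen_poly n \<alpha> \<beta>) = (0, 0)"
    using t_pow_n by (simp add: gen_poly_def eval_at_monom a_minus_def)
  moreover assume "P \<in> gen_ideal"
  then obtain F where "F \<in> carrier Rx" "P = F \<otimes>\<^bsub>Rx\<^esub> gen_poly n \<alpha> \<beta>"
    using Rx.P.cgenideal_eq_genideal[OF gen_poly_closed] by (auto simp: cgenideal_def)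
  ultimately show ?thesis using gen_poly_closed by simp
qed

lemma Rab_eval_ring_hom_cring: "ring_hom_cring Q gaussian_ring (Rab_eval t)"
  unfolding Rab_def Rab_eval_def[abs_def]
  by (intro ring_hom_cringI ideal.quotient_is_cring[OF gen_ideal_ideal Rx.P.is_cring]
      gaussian_ring_cring ev.ring.the_elem_image_ring_hom gen_ideal_ideal)
    (simp add: eval_at_gen_ideal)

lemma Rab_eval_cls: "P \<in> carrier Rx \<Longrightarrow> Rab_eval t (cl P) = eval_at t P"
  unfolding Rab_eval_def cls_def
  by (rule ev.ring.the_elem_image_rcos[OF gen_ideal_ideal]) (simp_all add: eval_at_gen_ideal)

lemma Rab_eval_one: "Rab_eval t \<one>\<^bsub>Q\<^esub> = (1, 0)"
  using ring_hom_one[OF ring_hom_cring.homh[OF Rab_eval_ring_hom_cring]] by simp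

lemma Rab_eval_const_cls: "Rab_eval t (const_cls c) = (c, 0)"
  by (simp add: const_cls_def Rab_eval_cls eval_at_monom)

lemma Rab_eval_x_cls: "Rab_eval t x_cls = t"
  by (simp add: x_cls_def Rab_eval_cls eval_at_monom)

lemma Rab_eval_quad: "Rab_eval t (quad c d)
    = t \<otimes>\<^bsub>gaussian_ring\<^esub> t \<oplus>\<^bsub>gaussian_ring\<^esub> (c, 0) \<otimes>\<^bsub>gaussian_ring\<^esub> t \<oplus>\<^bsub>gaussian_ring\<^esub> (d, 0)"
proof -
  interpret ev: ring_hom_cring Q gaussian_ring "Rab_eval t" by (rule Rab_eval_ring_hom_cring)
  show ?thesis
    by (simp add: quad_eq x_cls_square Rab_eval_const_cls Rab_eval_x_cls del: gaussian_ring_simps)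
qed

lemma PIdl_quad_iff_Rab_eval_zero:
  assumes t: "snd t \<noteq> 0" and root: "Rab_eval t (quad c d) = (0, 0)"
    and u: "u_cls \<in> PIdl\<^bsub>Q\<^esub> quad c d" and g: "g \<in> carrier Q"
  shows "g \<in> PIdl\<^bsub>Q\<^esub> quad c d \<longleftrightarrow> Rab_eval t g = (0, 0)"
proof -
  interpret ev: ring_hom_cring Q gaussian_ring "Rab_eval t" by (rule Rab_eval_ring_hom_cring)
  show ?thesis
  proof
    assume "g \<in> PIdl\<^bsub>Q\<^esub> quad c d"
    then obtain y where "y \<in> carrier Q" "g = y \<otimes>\<^bsub>Q\<^esub> quad c d" by (auto simp: cgenideal_def)
    then show "Rab_eval t g = (0, 0)" using root by simp
  next
    assume g0: "Rab_eval t g = (0, 0)"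
    obtain r s h where h: "h \<in> carrier Q"
      and g_eq: "g = const_cls r \<oplus>\<^bsub>Q\<^esub> const_cls s \<otimes>\<^bsub>Q\<^esub> x_cls \<oplus>\<^bsub>Q\<^esub> quad c d \<otimes>\<^bsub>Q\<^esub> h"
      using quad_normal_form[OF u g] .
    have "Rab_eval t g = (r + s * fst t, s * snd t)"
      unfolding g_eq using h root by (simp add: Rab_eval_const_cls Rab_eval_x_cls)
    then have "r = 0" "s = 0" using g0 t by auto
    then have "g = h \<otimes>\<^bsub>Q\<^esub> quad c d" using g_eq h by (simp add: const_cls_zero Q.m_comm)
    then show "g \<in> PIdl\<^bsub>Q\<^esub> quad c d" using h by (auto simp: cgenideal_def)
  qed
qed

end

end

section \<open>The ideals \<open>\<langle>q\<^sub>\<plusminus>\<rangle>\<close>\<close>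

text \<open>\<open>N\<close> stands for \<open>p\<^sup>s\<close>; of the characteristic only the Frobenius identity in \<open>F[x]\<close> is used.\<close>

locale Rab_setting = Rab_quotient n \<alpha> \<beta> for n :: nat and \<alpha> \<beta> :: "'a::field" +
  fixes \<alpha>0 \<gamma> :: 'a and N :: nat
  assumes n_eq: "n = 4 * N" and N_odd: "odd N"
    and \<alpha>0_pow_N: "\<alpha>0 ^ N = \<alpha>" and \<gamma>_pow_4: "\<gamma> ^ 4 + 4 * \<alpha>0 = 0"
    and \<alpha>_nonzero: "\<alpha> \<noteq> 0" and \<beta>_nonzero: "\<beta> \<noteq> 0"
    and minus_one_nonsquare: "\<not> (\<exists>y. y ^ 2 = (-1 :: 'a))"
    and frobenius: "\<And>f g :: 'a poly. (f + g) ^ N = f ^ N + g ^ N"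
begin

abbreviation "q_plus \<equiv> quad \<gamma> (\<gamma> ^ 2 / 2)"
abbreviation "q_minus \<equiv> quad (- \<gamma>) (\<gamma> ^ 2 / 2)"
abbreviation "quart \<equiv> cl (quart_poly \<alpha>0)"

lemma two_nonzero: "(2::'a) \<noteq> 0"
  by (rule two_neq_zero_if_minus_one_nonsquare[OF minus_one_nonsquare])

lemma four_nonzero: "(4::'a) \<noteq> 0"
  using two_nonzero mult_eq_0_iff[of "2::'a" 2] by simp

lemma \<gamma>_pow_4_eq: "\<gamma> ^ 4 = - (4 * \<alpha>0)"
  using \<gamma>_pow_4 by (simp add: eq_neg_iff_add_eq_0)

lemma \<gamma>_square_square [simp]: "(\<gamma> ^ 2 / 2) * (\<gamma> ^ 2 / 2) = - \<alpha>0"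
proof -
  have "(\<gamma> ^ 2 / 2) * (\<gamma> ^ 2 / 2) = \<gamma> ^ 4 / 4" by (simp add: power2_eq_square power4_eq_xxxx)
  also note \<gamma>_pow_4_eq
  finally show ?thesis using four_nonzero by simp
qed

lemma \<gamma>_nonzero: "\<gamma> \<noteq> 0"
proof
  assume "\<gamma> = 0"
  then have "\<alpha>0 = 0" using \<gamma>_square_square by simp
  then show False using \<alpha>0_pow_N \<alpha>_nonzero N_odd by (cases N) auto
qed

lemma quart_eq_q_plus_q_minus: "quart = q_plus \<otimes>\<^bsub>Q\<^esub> q_minus"
proof -
  define c where "c = const_cls \<gamma>"
  define d where "d = const_cls (\<gamma> ^ 2 / 2)"
  have closed: "c \<in> carrier Q" "d \<in> carrier Q" by (simp_all add: c_def d_def)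
  have cc: "c \<otimes>\<^bsub>Q\<^esub> c = d \<oplus>\<^bsub>Q\<^esub> d"
    using two_nonzero by (simp add: c_def d_def power2_eq_square flip: const_cls_mult const_cls_add)
  have dd: "d \<otimes>\<^bsub>Q\<^esub> d = \<ominus>\<^bsub>Q\<^esub> const_cls \<alpha>0"
    unfolding d_def const_cls_mult[symmetric] \<gamma>_square_square const_cls_minus ..
  have "q_plus \<otimes>\<^bsub>Q\<^esub> q_minus = x_cls \<otimes>\<^bsub>Q\<^esub> x_cls \<otimes>\<^bsub>Q\<^esub> (x_cls \<otimes>\<^bsub>Q\<^esub> x_cls)
      \<oplus>\<^bsub>Q\<^esub> ((d \<oplus>\<^bsub>Q\<^esub> d) \<ominus>\<^bsub>Q\<^esub> c \<otimes>\<^bsub>Q\<^esub> c) \<otimes>\<^bsub>Q\<^esub> (x_cls \<otimes>\<^bsub>Q\<^esub> x_cls) \<oplus>\<^bsub>Q\<^esub> d \<otimes>\<^bsub>Q\<^esub> d"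
    unfolding quad_eq const_cls_minus x_cls_square c_def[symmetric] d_def[symmetric]
    using closed x_cls_closed by algebra
  also have "\<dots> = x_cls \<otimes>\<^bsub>Q\<^esub> x_cls \<otimes>\<^bsub>Q\<^esub> (x_cls \<otimes>\<^bsub>Q\<^esub> x_cls) \<ominus>\<^bsub>Q\<^esub> const_cls \<alpha>0"
    unfolding cc dd using closed x_cls_closed const_cls_closed[of \<alpha>0] by algebra
  also have "\<dots> = quart"
    by (simp add: cls_quart_poly numeral_eq_Suc Q.m_assoc)
  finally show ?thesis ..
qed

lemma quart_closed [simp]: "quart \<in> carrier Q"
  by (simp add: quart_eq_q_plus_q_minus)

lemma quart_pow_N: "quart [^]\<^bsub>Q\<^esub> N = const_cls \<beta> \<otimes>\<^bsub>Q\<^esub> u_cls"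
proof -
  have "quart = embed_poly (Polynomial.monom 1 4 + - [:\<alpha>0:])"
    by (simp add: cls_quart_poly embed_poly_add embed_poly_minus embed_poly_monom embed_poly_const
        const_cls_minus Q.minus_eq)
  then have "quart [^]\<^bsub>Q\<^esub> N = embed_poly ((Polynomial.monom 1 4 + - [:\<alpha>0:]) ^ N)"
    by (simp add: embed_poly_pow)
  also have "(Polynomial.monom 1 4 + - [:\<alpha>0:]) ^ N = Polynomial.monom 1 n + - [:\<alpha>:]"
    using frobenius[of "Polynomial.monom 1 4" "- [:\<alpha>0:]"] N_odd \<alpha>0_pow_N n_eq
      monom_power[of "1::'a" 4 N] monom_power[of "- \<alpha>0" 0 N]
    by (simp add: monom_0 power_minus_odd mult.commute)
  also have "embed_poly \<dots> = x_cls [^]\<^bsub>Q\<^esub> n \<ominus>\<^bsub>Q\<^esub> const_cls \<alpha>"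
    by (simp add: embed_poly_add embed_poly_minus embed_poly_monom embed_poly_const
        const_cls_minus Q.minus_eq)
  also have "\<dots> = const_cls \<beta> \<otimes>\<^bsub>Q\<^esub> u_cls"
    unfolding x_cls_pow_n using const_cls_closed[of \<alpha>] const_cls_closed[of \<beta>] u_cls_closed
    by algebra
  finally show ?thesis .
qed

lemma quart_nilpotent: "quart [^]\<^bsub>Q\<^esub> (2 * N) = \<zero>\<^bsub>Q\<^esub>"
proof -
  have "quart [^]\<^bsub>Q\<^esub> (2 * N) = (const_cls \<beta> \<otimes>\<^bsub>Q\<^esub> const_cls \<beta>) \<otimes>\<^bsub>Q\<^esub> (u_cls \<otimes>\<^bsub>Q\<^esub> u_cls)"
    unfolding mult_2 Q.nat_pow_mult[symmetric, OF quart_closed] quart_pow_N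
    using const_cls_closed[of \<beta>] u_cls_closed by algebra
  then show ?thesis by (simp add: u_cls_square)
qed

lemma u_cls_in_PIdl: "u_cls \<in> PIdl\<^bsub>Q\<^esub> q_plus" "u_cls \<in> PIdl\<^bsub>Q\<^esub> q_minus"
proof -
  define w where "w = const_cls (1 / \<beta>) \<otimes>\<^bsub>Q\<^esub> quart [^]\<^bsub>Q\<^esub> (N - 1)"
  have w: "w \<in> carrier Q" by (simp add: w_def)
  have inv: "const_cls (1 / \<beta>) \<otimes>\<^bsub>Q\<^esub> const_cls \<beta> = \<one>\<^bsub>Q\<^esub>"
    using \<beta>_nonzero by (simp add: const_cls_one flip: const_cls_mult)
  have "u_cls = (const_cls (1 / \<beta>) \<otimes>\<^bsub>Q\<^esub> const_cls \<beta>) \<otimes>\<^bsub>Q\<^esub> u_cls"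
    unfolding inv by simp
  also have "\<dots> = const_cls (1 / \<beta>) \<otimes>\<^bsub>Q\<^esub> quart [^]\<^bsub>Q\<^esub> N"
    unfolding quart_pow_N by (simp add: Q.m_assoc)
  also have "quart [^]\<^bsub>Q\<^esub> N = quart [^]\<^bsub>Q\<^esub> (N - 1) \<otimes>\<^bsub>Q\<^esub> quart"
    using N_odd by (cases N) simp_all
  finally have "u_cls = w \<otimes>\<^bsub>Q\<^esub> (q_plus \<otimes>\<^bsub>Q\<^esub> q_minus)"
    by (simp add: w_def Q.m_assoc quart_eq_q_plus_q_minus)
  then have "u_cls = (w \<otimes>\<^bsub>Q\<^esub> q_minus) \<otimes>\<^bsub>Q\<^esub> q_plus" "u_cls = (w \<otimes>\<^bsub>Q\<^esub> q_plus) \<otimes>\<^bsub>Q\<^esub> q_minus"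
    using w by (simp_all add: Q.m_ac)
  then show "u_cls \<in> PIdl\<^bsub>Q\<^esub> q_plus" "u_cls \<in> PIdl\<^bsub>Q\<^esub> q_minus"
    using w unfolding cgenideal_def by auto
qed

definition "root_plus = (- \<gamma> / 2, \<gamma> / 2)"
definition "root_minus = (\<gamma> / 2, - \<gamma> / 2)"

lemma root_square: "root_plus \<otimes>\<^bsub>gaussian_ring\<^esub> root_plus = (0, - (\<gamma> ^ 2 / 2))"
  using two_nonzero four_nonzero by (simp add: root_plus_def field_simps power2_eq_square)

lemma root_plus_pow_n: "root_plus [^]\<^bsub>gaussian_ring\<^esub> n = (\<alpha>, 0)"
  and root_minus_pow_n: "root_minus [^]\<^bsub>gaussian_ring\<^esub> n = (\<alpha>, 0)"
proof -
  interpret C: cring "gaussian_ring :: ('a \<times> 'a) ring" by (rule gaussian_ring_cring)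
  have pow_n: "t [^]\<^bsub>gaussian_ring\<^esub> n = (\<alpha>, 0)"
    if "t \<otimes>\<^bsub>gaussian_ring\<^esub> t = root_plus \<otimes>\<^bsub>gaussian_ring\<^esub> root_plus" for t
  proof -
    have "t [^]\<^bsub>gaussian_ring\<^esub> (4::nat) = (t \<otimes>\<^bsub>gaussian_ring\<^esub> t) \<otimes>\<^bsub>gaussian_ring\<^esub> (t \<otimes>\<^bsub>gaussian_ring\<^esub> t)"
      by (simp add: numeral_eq_Suc C.m_assoc del: gaussian_ring_simps(2,4))
    then have "t [^]\<^bsub>gaussian_ring\<^esub> (4::nat) = (\<alpha>0, 0)"
      unfolding that root_square by (simp add: \<gamma>_pow_4_eq four_nonzero)
    then show ?thesis
      by (simp add: n_eq C.nat_pow_pow[symmetric] gaussian_ring_pow_const \<alpha>0_pow_N)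
  qed
  show "root_plus [^]\<^bsub>gaussian_ring\<^esub> n = (\<alpha>, 0)" by (rule pow_n) (rule refl)
  show "root_minus [^]\<^bsub>gaussian_ring\<^esub> n = (\<alpha>, 0)"
    by (rule pow_n) (simp add: root_plus_def root_minus_def)
qed

lemma Rab_eval_roots:
  "Rab_eval root_plus q_plus = (0, 0)"
  "Rab_eval root_minus q_minus = (0, 0)"
  "Rab_eval root_plus q_minus = (\<gamma> ^ 2, - (\<gamma> ^ 2))"
  "Rab_eval root_minus q_plus = (\<gamma> ^ 2, - (\<gamma> ^ 2))"
proof -
  have "(8::'a) \<noteq> 0" using two_nonzero four_nonzero mult_eq_0_iff[of "2::'a" 4] by simp
  then show "Rab_eval root_plus q_plus = (0, 0)" "Rab_eval root_minus q_minus = (0, 0)"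
    "Rab_eval root_plus q_minus = (\<gamma> ^ 2, - (\<gamma> ^ 2))" "Rab_eval root_minus q_plus = (\<gamma> ^ 2, - (\<gamma> ^ 2))"
    unfolding Rab_eval_quad[OF root_plus_pow_n] Rab_eval_quad[OF root_minus_pow_n]
    using two_nonzero four_nonzero
    by (simp_all add: root_plus_def root_minus_def field_simps power2_eq_square)
qed

lemma PIdl_q_plus_iff: "g \<in> carrier Q \<Longrightarrow> g \<in> PIdl\<^bsub>Q\<^esub> q_plus \<longleftrightarrow> Rab_eval root_plus g = (0, 0)"
  using PIdl_quad_iff_Rab_eval_zero[OF root_plus_pow_n] Rab_eval_roots(1) u_cls_in_PIdl(1)
    \<gamma>_nonzero two_nonzero by (simp add: root_plus_def)

lemma PIdl_q_minus_iff:
  "g \<in> carrier Q \<Longrightarrow> g \<in> PIdl\<^bsub>Q\<^esub> q_minus \<longleftrightarrow> Rab_eval root_minus g = (0, 0)"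
  using PIdl_quad_iff_Rab_eval_zero[OF root_minus_pow_n] Rab_eval_roots(2) u_cls_in_PIdl(2)
    \<gamma>_nonzero two_nonzero by (simp add: root_minus_def)

lemma one_notin_PIdl: "\<one>\<^bsub>Q\<^esub> \<notin> PIdl\<^bsub>Q\<^esub> q_plus" "\<one>\<^bsub>Q\<^esub> \<notin> PIdl\<^bsub>Q\<^esub> q_minus"
  using PIdl_q_plus_iff[OF Q.one_closed] PIdl_q_minus_iff[OF Q.one_closed]
    Rab_eval_one[OF root_plus_pow_n] Rab_eval_one[OF root_minus_pow_n]
  by simp_all

lemma nonunits_eq_Un_PIdl: "carrier Q - Units Q = PIdl\<^bsub>Q\<^esub> q_plus \<union> PIdl\<^bsub>Q\<^esub> q_minus"
proof
  show "carrier Q - Units Q \<subseteq> PIdl\<^bsub>Q\<^esub> q_plus \<union> PIdl\<^bsub>Q\<^esub> q_minus"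
  proof (rule subsetI, rule ccontr)
    fix g assume g: "g \<in> carrier Q - Units Q" and notin: "g \<notin> PIdl\<^bsub>Q\<^esub> q_plus \<union> PIdl\<^bsub>Q\<^esub> q_minus"
    have minus_\<gamma>: "quad (- \<gamma>) ((- \<gamma>) ^ 2 / 2) = q_minus" by simp
    obtain W1 B1 where W1: "W1 \<in> carrier Q" "B1 \<in> carrier Q"
      and inv1: "g \<otimes>\<^bsub>Q\<^esub> W1 = \<one>\<^bsub>Q\<^esub> \<oplus>\<^bsub>Q\<^esub> q_plus \<otimes>\<^bsub>Q\<^esub> B1"
      using invertible_modulo_quad_if_notin[OF minus_one_nonsquare \<gamma>_nonzero u_cls_in_PIdl(1)] g notin
      by blast
    obtain W2 B2 where W2: "W2 \<in> carrier Q" "B2 \<in> carrier Q"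
      and inv2: "g \<otimes>\<^bsub>Q\<^esub> W2 = \<one>\<^bsub>Q\<^esub> \<oplus>\<^bsub>Q\<^esub> q_minus \<otimes>\<^bsub>Q\<^esub> B2"
      using invertible_modulo_quad_if_notin[of "- \<gamma>", unfolded minus_\<gamma>,
          OF minus_one_nonsquare _ u_cls_in_PIdl(2)] \<gamma>_nonzero g notin
      by auto
    have "(q_plus \<otimes>\<^bsub>Q\<^esub> q_minus) [^]\<^bsub>Q\<^esub> (2 * N) = \<zero>\<^bsub>Q\<^esub>"
      using quart_nilpotent by (simp add: quart_eq_q_plus_q_minus)
    then have "g \<in> Units Q"
      using g W1 W2 inv1 inv2
      by (intro Q.Units_if_invertible_modulo_nilpotent_factors[of g q_plus q_minus W1 B1 W2 B2]) auto
    then show False using g by blast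
  qed
  have "PIdl\<^bsub>Q\<^esub> q \<subseteq> carrier Q - Units Q" if "q \<in> carrier Q" "\<one>\<^bsub>Q\<^esub> \<notin> PIdl\<^bsub>Q\<^esub> q" for q
  proof -
    interpret ideal "PIdl\<^bsub>Q\<^esub> q" Q by (rule Q.cgenideal_ideal[OF that(1)])
    have "PIdl\<^bsub>Q\<^esub> q \<inter> Units Q = {}" using Units_disjoint that(2) by blast
    then show ?thesis using a_subset by blast
  qed
  then show "PIdl\<^bsub>Q\<^esub> q_plus \<union> PIdl\<^bsub>Q\<^esub> q_minus \<subseteq> carrier Q - Units Q"
    using one_notin_PIdl by simp
qed

lemma PIdl_incomparable: "\<not> PIdl\<^bsub>Q\<^esub> q_plus \<subseteq> PIdl\<^bsub>Q\<^esub> q_minus" "\<not> PIdl\<^bsub>Q\<^esub> q_minus \<subseteq> PIdl\<^bsub>Q\<^esub> q_plus"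
proof -
  have "q_plus \<in> PIdl\<^bsub>Q\<^esub> q_plus" "q_minus \<in> PIdl\<^bsub>Q\<^esub> q_minus"
    by (simp_all add: Q.cgenideal_self)
  moreover have "q_plus \<notin> PIdl\<^bsub>Q\<^esub> q_minus" "q_minus \<notin> PIdl\<^bsub>Q\<^esub> q_plus"
    using PIdl_q_minus_iff[OF quad_closed] PIdl_q_plus_iff[OF quad_closed] Rab_eval_roots(3,4)
      \<gamma>_nonzero by simp_all
  ultimately show "\<not> PIdl\<^bsub>Q\<^esub> q_plus \<subseteq> PIdl\<^bsub>Q\<^esub> q_minus" "\<not> PIdl\<^bsub>Q\<^esub> q_minus \<subseteq> PIdl\<^bsub>Q\<^esub> q_plus"
    by blast+
qed

lemma maximal_ideals: "{M. maximalideal M Q} = {PIdl\<^bsub>Q\<^esub> q_plus, PIdl\<^bsub>Q\<^esub> q_minus}"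
  by (rule Q.maximal_ideals_if_nonunits_eq_Un[OF Q.cgenideal_ideal Q.cgenideal_ideal
        PIdl_incomparable nonunits_eq_Un_PIdl]) simp_all

lemma nilpotents_eq_PIdl_quart: "{a. nilpotent_elem Q a} = PIdl\<^bsub>Q\<^esub> quart"
proof
  interpret plus: ring_hom_cring Q gaussian_ring "Rab_eval root_plus"
    by (rule Rab_eval_ring_hom_cring[OF root_plus_pow_n])
  interpret minus: ring_hom_cring Q gaussian_ring "Rab_eval root_minus"
    by (rule Rab_eval_ring_hom_cring[OF root_minus_pow_n])
  interpret C: domain "gaussian_ring :: ('a \<times> 'a) ring"
    by (rule gaussian_ring_domain[OF minus_one_nonsquare])
  show "{a. nilpotent_elem Q a} \<subseteq> PIdl\<^bsub>Q\<^esub> quart"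
  proof
    fix a assume "a \<in> {a. nilpotent_elem Q a}"
    then obtain k where a: "a \<in> carrier Q" "a [^]\<^bsub>Q\<^esub> (k::nat) = \<zero>\<^bsub>Q\<^esub>"
      unfolding nilpotent_elem_def by blast
    \<comment> \<open>a nilpotent element lies in the kernel of every evaluation into the domain \<open>F[i]\<close>\<close>
    have "Rab_eval t a = (0, 0)" if "ring_hom_cring Q gaussian_ring (Rab_eval t)" for t
    proof -
      have "Rab_eval t a [^]\<^bsub>gaussian_ring\<^esub> k = Rab_eval t (a [^]\<^bsub>Q\<^esub> k)"
        using ring_hom_cring.hom_pow[OF that a(1)] by simp
      also have "\<dots> = (0, 0)" using a(2) ring_hom_cring.hom_zero[OF that] by simp
      finally show ?thesis using C.nat_pow_eq_zero_imp_zero[of "Rab_eval t a" k] by simp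
    qed
    then have ev: "Rab_eval root_plus a = (0, 0)" "Rab_eval root_minus a = (0, 0)"
      using plus.ring_hom_cring_axioms minus.ring_hom_cring_axioms by blast+
    obtain y where y: "y \<in> carrier Q" "a = y \<otimes>\<^bsub>Q\<^esub> q_plus"
      using ev(1) PIdl_q_plus_iff[OF a(1)] by (auto simp: cgenideal_def)
    have "Rab_eval root_minus y \<otimes>\<^bsub>gaussian_ring\<^esub> Rab_eval root_minus q_plus = (0, 0)"
      using ev(2) y by (simp del: gaussian_ring_simps)
    then have "Rab_eval root_minus y = (0, 0) \<or> Rab_eval root_minus q_plus = (0, 0)"
      using C.integral[of "Rab_eval root_minus y" "Rab_eval root_minus q_plus"] by simp
    then have "Rab_eval root_minus y = (0, 0)"
      using Rab_eval_roots(4) \<gamma>_nonzero by auto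
    then obtain z where z: "z \<in> carrier Q" "y = z \<otimes>\<^bsub>Q\<^esub> q_minus"
      using PIdl_q_minus_iff[OF y(1)] by (auto simp: cgenideal_def)
    have "a = z \<otimes>\<^bsub>Q\<^esub> quart"
      using y z by (simp add: quart_eq_q_plus_q_minus Q.m_ac)
    then show "a \<in> PIdl\<^bsub>Q\<^esub> quart" using z(1) by (auto simp: cgenideal_def)
  qed
  show "PIdl\<^bsub>Q\<^esub> quart \<subseteq> {a. nilpotent_elem Q a}"
  proof
    fix a assume "a \<in> PIdl\<^bsub>Q\<^esub> quart"
    then obtain x where x: "x \<in> carrier Q" "a = x \<otimes>\<^bsub>Q\<^esub> quart" by (auto simp: cgenideal_def)
    then have "a [^]\<^bsub>Q\<^esub> (2 * N) = \<zero>\<^bsub>Q\<^esub>" by (simp add: Q.nat_pow_distrib quart_nilpotent)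
    then show "a \<in> {a. nilpotent_elem Q a}" using x by (auto simp: nilpotent_elem_def)
  qed
qed

end

lemma CHAR_eq_prime_if_card_prime_power:
  assumes "Factorial_Ring.prime p" and "card (UNIV :: 'a::{finite, field} set) = p ^ m"
  shows "CHAR('a) = p"
proof -
  have prime: "Factorial_Ring.prime CHAR('a)" by (simp add: finite_imp_CHAR_pos prime_CHAR_semidom)
  moreover have "CHAR('a) dvd p ^ m" using CHAR_dvd_CARD[where 'a = 'a] assms(2) by simp
  ultimately have "CHAR('a) dvd p" using prime_dvd_power by blast
  then show ?thesis using assms(1) prime by (simp add: primes_dvd_imp_eq)
qed

theorem corollary3p3:
  fixes p m s :: nat and \<alpha> \<alpha>0 \<gamma> \<beta> :: "'a::{finite, field}"
  assumes "Factorial_Ring.prime p" and "odd p" and "m > 0" and "s > 0"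
    and "card (UNIV :: 'a set) = p ^ m"
    and "p ^ m mod 4 = 3"
    and "\<alpha> \<noteq> 0" and "\<not> (\<exists>y. y ^ 2 = \<alpha>)"
    and "\<alpha>0 ^ (p ^ s) = \<alpha>"
    and "\<gamma> ^ 4 + 4 * \<alpha>0 = 0"
    and "\<beta> \<noteq> 0"
  defines "n \<equiv> 4 * p ^ s"
  defines "M1 \<equiv> Idl\<^bsub>Rab n \<alpha> \<beta>\<^esub> {cls n \<alpha> \<beta> (quad_poly \<gamma> (\<gamma>^2 / 2))}"
  defines "M2 \<equiv> Idl\<^bsub>Rab n \<alpha> \<beta>\<^esub> {cls n \<alpha> \<beta> (quad_poly (- \<gamma>) (\<gamma>^2 / 2))}"
  shows "(M1 \<noteq> M2 \<and> {M. maximalideal M (Rab n \<alpha> \<beta>)} = {M1, M2})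
    \<and> {a. nilpotent_elem (Rab n \<alpha> \<beta>) a}
           = Idl\<^bsub>Rab n \<alpha> \<beta>\<^esub> {cls n \<alpha> \<beta> (quart_poly \<alpha>0)}
    \<and> carrier (Rab n \<alpha> \<beta>) - Units (Rab n \<alpha> \<beta>) = M1 \<union> M2"
proof -
  have char: "CHAR('a) = p" by (rule CHAR_eq_prime_if_card_prime_power) fact+
  have "\<not> p dvd 2" using assms(1,2) primes_dvd_imp_eq[of p 2] by auto
  then have "(2::'a) \<noteq> 0" using of_nat_eq_0_iff_char_dvd[of 2, where 'a = 'a] char by simp
  interpret Rab_setting n \<alpha> \<beta> \<alpha>0 \<gamma> "p ^ s"
  proof
    show "\<not> (\<exists>y. y ^ 2 = (-1 :: 'a))"
      using minus_one_nonsquare_if_nonsquare_power[OF \<open>(2::'a) \<noteq> 0\<close> assms(10), of "p ^ s"]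
        assms(8,9) by simp
    show "(f + g) ^ p ^ s = f ^ p ^ s + g ^ p ^ s" for f g :: "'a poly"
      by (rule freshmans_dream') (simp_all add: char assms(1))
  qed (simp_all add: n_def assms)
  have M: "M1 = PIdl\<^bsub>Q\<^esub> q_plus" "M2 = PIdl\<^bsub>Q\<^esub> q_minus"
    and nil: "Idl\<^bsub>Q\<^esub> {cl (quart_poly \<alpha>0)} = PIdl\<^bsub>Q\<^esub> quart"
    unfolding M1_def M2_def quad_def[symmetric] by (simp_all add: Q.cgenideal_eq_genideal)
  show ?thesis
    unfolding M nil using PIdl_incomparable maximal_ideals nilpotents_eq_PIdl_quart nonunits_eq_Un_PIdl
    by blast
qed

end
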